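(* Let $G$ be a connected graph and $T$ a spanning tree of $G$ rooted in $s$. Then $T$ is an $\mathcal L$-tree of LexDFS on $G$ if and only if $T$ is an $\mathcal L$-tree of CompLexDFS on $G$. Likewise, $T$ is an $\mathcal L$-tree of LexBFS on $G$ if and only if $T$ is an $\mathcal L$-tree of CompLexBFS on $G$.
   Context: Graphs are finite, simple, undirected. LexDFS started at $s$: label $s$ with $(0)$, all others with the empty label; for $i=1,\dots,n$ pick an unnumbered vertex $v$ with lexicographically largest label, set $\sigma(i)=v$, and prepend $i$ to the label of each unnumbered neighbor of $v$. LexBFS started at $s$: label $s$ with $(n)$, others empty; same loop but append $n-i$ to the label of each unnumbered neighbor of $v$. CompLexDFS (resp. CompLexBFS) is the same as LexDFS (resp. LexBFS) except that the choice step becomes: choose a connected component $C$ of the subgraph induced by the unnumbered vertices and pick a vertex of $C$ with lexicographically largest label (among vertices of $C$). A $\mathcal P$-order is any possible output of search $\mathcal P$. The $\mathcal L$-tree of a vertex order $(v_1,\dots,v_n)$ is the spanning tree rooted at $v_1$ with an edge from each $v_i$ ($i>1$) to its rightmost neighbor $v_j$ with $j<i$. A spanning tree $T$ rooted at $s$ is an $\mathcal L$-tree of $\mathcal P$ on $G$ if some $\mathcal P$-order of $G$ starting at $s$ has $\mathcal L$-tree $T$ (same edge set and root). *)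

theory Defs
  imports Main
begin

definition simple_graph :: "'a set \<Rightarrow> 'a set set \<Rightarrow> bool" where
  "simple_graph V E \<longleftrightarrow> finite V \<and>
     (\<forall>e\<in>E. \<exists>u v. e = {u, v} \<and> u \<noteq> v \<and> u \<in> V \<and> v \<in> V)"

definition induced_rel :: "'a set set \<Rightarrow> 'a set \<Rightarrow> ('a \<times> 'a) set" where
  "induced_rel E U = {(a, b). a \<in> U \<and> b \<in> U \<and> {a, b} \<in> E}"

definition same_comp :: "'a set set \<Rightarrow> 'a set \<Rightarrow> 'a \<Rightarrow> 'a \<Rightarrow> bool" where
  "same_comp E U x y \<longleftrightarrow> x \<in> U \<and> y \<in> U \<and> (x, y) \<in> (induced_rel E U)\<^sup>*"

definition graph_connected :: "'a set \<Rightarrow> 'a set set \<Rightarrow> bool" where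
  "graph_connected V E \<longleftrightarrow> V \<noteq> {} \<and> (\<forall>x\<in>V. \<forall>y\<in>V. same_comp E V x y)"

definition spanning_tree :: "'a set \<Rightarrow> 'a set set \<Rightarrow> 'a set set \<Rightarrow> bool" where
  "spanning_tree V E T \<longleftrightarrow> T \<subseteq> E \<and> graph_connected V T \<and> card T = card V - 1"

text \<open>Strict lexicographic order on labels (a proper prefix is smaller).\<close>
definition lex_less :: "nat list \<Rightarrow> nat list \<Rightarrow> bool" where
  "lex_less xs ys \<longleftrightarrow> (xs, ys) \<in> lexord {(u, v). u < v}"

text \<open>Labels during LexDFS: label of w after the first k vertices sigma!0..sigma!(k-1)
  (numbered 1..k) have been processed.\<close>
fun dfs_label :: "'a set set \<Rightarrow> 'a \<Rightarrow> 'a list \<Rightarrow> nat \<Rightarrow> 'a \<Rightarrow> nat list" where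
  "dfs_label E s \<sigma> 0 w = (if w = s then [0] else [])"
| "dfs_label E s \<sigma> (Suc k) w =
     (if {\<sigma> ! k, w} \<in> E \<and> w \<notin> set (take (Suc k) \<sigma>)
      then Suc k # dfs_label E s \<sigma> k w else dfs_label E s \<sigma> k w)"

fun bfs_label :: "nat \<Rightarrow> 'a set set \<Rightarrow> 'a \<Rightarrow> 'a list \<Rightarrow> nat \<Rightarrow> 'a \<Rightarrow> nat list" where
  "bfs_label n E s \<sigma> 0 w = (if w = s then [n] else [])"
| "bfs_label n E s \<sigma> (Suc k) w =
     (if {\<sigma> ! k, w} \<in> E \<and> w \<notin> set (take (Suc k) \<sigma>)
      then bfs_label n E s \<sigma> k w @ [n - Suc k] else bfs_label n E s \<sigma> k w)"

datatype search = LexDFS | LexBFS | CompLexDFS | CompLexBFS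

definition search_label :: "search \<Rightarrow> 'a set \<Rightarrow> 'a set set \<Rightarrow> 'a \<Rightarrow> 'a list \<Rightarrow> nat \<Rightarrow> 'a \<Rightarrow> nat list" where
  "search_label P V E s \<sigma> k w =
     (case P of LexDFS \<Rightarrow> dfs_label E s \<sigma> k w
              | CompLexDFS \<Rightarrow> dfs_label E s \<sigma> k w
              | LexBFS \<Rightarrow> bfs_label (card V) E s \<sigma> k w
              | CompLexBFS \<Rightarrow> bfs_label (card V) E s \<sigma> k w)"

definition is_comp_search :: "search \<Rightarrow> bool" where
  "is_comp_search P \<longleftrightarrow> P = CompLexDFS \<or> P = CompLexBFS"

text \<open>At step i (0-based index k = i-1) with unnumbered set U, the chosen vertex sigma!k has
  a lexicographically largest label among all of U (LexDFS/LexBFS), resp. among the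
  vertices of its own connected component of G[U] (CompLexDFS/CompLexBFS; choosing a
  component C and a label-maximal vertex of C is the same as choosing a vertex whose label
  is maximal within its component).\<close>
definition search_order :: "search \<Rightarrow> 'a set \<Rightarrow> 'a set set \<Rightarrow> 'a \<Rightarrow> 'a list \<Rightarrow> bool" where
  "search_order P V E s \<sigma> \<longleftrightarrow>
     distinct \<sigma> \<and> set \<sigma> = V \<and>
     (\<forall>k < length \<sigma>.
        let U = V - set (take k \<sigma>) in
        \<forall>w \<in> U. (\<not> is_comp_search P \<or> same_comp E U (\<sigma> ! k) w) \<longrightarrow>
          \<not> lex_less (search_label P V E s \<sigma> k (\<sigma> ! k)) (search_label P V E s \<sigma> k w))"

definition L_tree_edges :: "'a set set \<Rightarrow> 'a list \<Rightarrow> 'a set set" where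
  "L_tree_edges E \<sigma> =
     {{\<sigma> ! i, \<sigma> ! j} | i j. 0 < i \<and> i < length \<sigma> \<and> j < i \<and> {\<sigma> ! j, \<sigma> ! i} \<in> E \<and>
        (\<forall>k. j < k \<and> k < i \<longrightarrow> {\<sigma> ! k, \<sigma> ! i} \<notin> E)}"

definition is_L_tree :: "search \<Rightarrow> 'a set \<Rightarrow> 'a set set \<Rightarrow> 'a \<Rightarrow> 'a set set \<Rightarrow> bool" where
  "is_L_tree P V E s T \<longleftrightarrow>
     (\<exists>\<sigma>. search_order P V E s \<sigma> \<and> \<sigma> \<noteq> [] \<and> hd \<sigma> = s \<and> L_tree_edges E \<sigma> = T)"

end

theory Submission
  imports Defs "HOL-Library.List_Lexorder" "HOL-Combinatorics.Permutations"
begin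

text \<open>
  Every LexDFS (LexBFS) order is a CompLexDFS (CompLexBFS) order, so one direction is trivial.
  Conversely, let \<sigma> be a component order and k the first step at which \<sigma> ! k is not
  label-maximal among all unvisited vertices U. Take x \<in> U of maximal label; it lies in a
  component D of G[U] other than that of \<sigma> ! k. Two consecutive vertices lying in different
  components of the graph induced by the vertices not visited before them are non-adjacent, have
  no common later neighbour, and never both have neighbours in a component of a later unvisited
  graph. Swapping them therefore changes neither the comparisons of labels within components nor
  the rightmost earlier neighbours, i.e. it preserves the component order and its L-tree. Such
  swaps move the first vertex of D after position k to position k, where it is label-maximal in
  D \<ni> x and hence in U. Repeating this for k = 1, 2, \<dots> gives a search order with the same
  L-tree; step 0 needs no repair since the start vertex has the only non-empty label.
\<close>

section \<open>Lists and adjacent transpositions\<close>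

lemma map_less_map_iff:
  fixes f g :: "'a \<Rightarrow> 'b::linorder"
  assumes "\<forall>u\<in>set xs \<union> set ys. \<forall>v\<in>set xs \<union> set ys. f u < f v \<longleftrightarrow> g u < g v"
  shows "map f xs < map f ys \<longleftrightarrow> map g xs < map g ys"
  using assms
proof (induction xs arbitrary: ys)
  case Nil
  then show ?case by (cases ys) auto
next
  case (Cons a xs)
  then show ?case
  proof (cases ys)
    case (Cons b ys')
    have "f a < f b \<longleftrightarrow> g a < g b" "f b < f a \<longleftrightarrow> g b < g a"
      using Cons.prems Cons by auto
    moreover have "map f xs < map f ys' \<longleftrightarrow> map g xs < map g ys'"
      using Cons.IH[of ys'] Cons.prems Cons by auto
    ultimately show ?thesis
      using Cons by (auto simp: linorder_neq_iff)
  qed simp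
qed

lemma transpose_Suc_less_iff:
  assumes "\<not> (u = i \<and> v = Suc i)" "\<not> (u = Suc i \<and> v = i)"
  shows "transpose i (Suc i) u < transpose i (Suc i) v \<longleftrightarrow> u < v"
  using assms by (auto simp: transpose_def)

lemma transpose_Suc_between_cases:
  fixes i k p q :: nat
  assumes "transpose i (Suc i) q < k" "k < transpose i (Suc i) p" "q < p"
  obtains "q < transpose i (Suc i) k" "transpose i (Suc i) k < p"
    | "transpose i (Suc i) q = i" "k = Suc i"
    | "k = i" "transpose i (Suc i) p = Suc i"
  using assms by (cases "k = i"; cases "k = Suc i"; auto simp: transpose_def split: if_splits)

lemma set_take_eq_image_nth: "set (take k xs) = (\<lambda>j. xs ! j) ` {..<min k (length xs)}"
  by (force simp: in_set_conv_nth image_iff)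

lemma nth_notin_take: "distinct \<sigma> \<Longrightarrow> k \<le> j \<Longrightarrow> j < length \<sigma> \<Longrightarrow> \<sigma> ! j \<notin> set (take k \<sigma>)"
  by (auto simp: in_set_conv_nth nth_eq_iff_index_eq)

lemma not_in_take_SucD: "w \<notin> set (take (Suc k) \<sigma>) \<Longrightarrow> w \<notin> set (take k \<sigma>)"
  using set_take_subset_set_take[of k "Suc k" \<sigma>] by auto

lemma take_Suc_eqD: "take (Suc k) \<sigma> = take (Suc k) \<tau> \<Longrightarrow> take k \<sigma> = take k \<tau> \<and> \<sigma> ! k = \<tau> ! k"
  by (metis lessI min.absorb1 nth_take take_take le_SucI order_refl)

lemma take_eq_take_le: "take k \<sigma> = take k \<tau> \<Longrightarrow> j \<le> k \<Longrightarrow> take j \<sigma> = take j \<tau>"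
  by (metis min.absorb1 take_take)

definition swap_at :: "nat \<Rightarrow> 'a list \<Rightarrow> 'a list" where
  "swap_at i \<sigma> = permute_list (transpose i (Suc i)) \<sigma>"

lemma transpose_Suc_permutes: "Suc i < n \<Longrightarrow> transpose i (Suc i) permutes {..<n}"
  by (rule permutes_swap_id) auto

lemma length_swap_at [simp]: "length (swap_at i \<sigma>) = length \<sigma>"
  by (simp add: swap_at_def)

lemma nth_swap_at: "Suc i < length \<sigma> \<Longrightarrow> j < length \<sigma> \<Longrightarrow> swap_at i \<sigma> ! j = \<sigma> ! transpose i (Suc i) j"
  by (simp add: swap_at_def permute_list_nth transpose_Suc_permutes)

lemma set_swap_at [simp]: "Suc i < length \<sigma> \<Longrightarrow> set (swap_at i \<sigma>) = set \<sigma>"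
  by (simp add: swap_at_def transpose_Suc_permutes)

lemma distinct_swap_at [simp]: "Suc i < length \<sigma> \<Longrightarrow> distinct (swap_at i \<sigma>) = distinct \<sigma>"
  by (simp add: swap_at_def transpose_Suc_permutes)

lemma swap_at_swap_at [simp]: "Suc i < length \<sigma> \<Longrightarrow> swap_at i (swap_at i \<sigma>) = \<sigma>"
  by (simp add: swap_at_def transpose_Suc_permutes flip: permute_list_compose)

lemma take_swap_at: "k \<le> i \<Longrightarrow> take k (swap_at i \<sigma>) = take k \<sigma>"
  by (rule nth_equalityI) (auto simp: swap_at_def permute_list_def transpose_def)

lemma set_take_Suc_swap_at:
  "Suc i < length \<sigma> \<Longrightarrow> set (take (Suc i) (swap_at i \<sigma>)) = insert (\<sigma> ! Suc i) (set (take i \<sigma>))"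
  by (simp add: take_Suc_conv_app_nth take_swap_at nth_swap_at)

lemma set_take_swap_at:
  assumes "Suc i < k" "Suc i < length \<sigma>"
  shows "set (take k (swap_at i \<sigma>)) = set (take k \<sigma>)"
proof -
  let ?t = "transpose i (Suc i)" and ?m = "min k (length \<sigma>)"
  have "(\<lambda>j. swap_at i \<sigma> ! j) ` {..<?m} = (\<lambda>j. \<sigma> ! j) ` ?t ` {..<?m}"
    unfolding image_image by (rule image_cong) (use assms in \<open>auto simp: nth_swap_at\<close>)
  also have "?t ` {..<?m} = {..<?m}"
    using assms by (intro permutes_image transpose_Suc_permutes) simp
  finally show ?thesis
    by (simp add: set_take_eq_image_nth)
qed

section \<open>Labels\<close>

definition nbr_indices :: "'a set set \<Rightarrow> 'a list \<Rightarrow> nat \<Rightarrow> 'a \<Rightarrow> nat list" where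
  "nbr_indices E \<sigma> k w = filter (\<lambda>i. {\<sigma> ! i, w} \<in> E) [0..<k]"

lemma set_nbr_indices: "set (nbr_indices E \<sigma> k w) = {i. i < k \<and> {\<sigma> ! i, w} \<in> E}"
  by (auto simp: nbr_indices_def)

lemma nbr_indices_0 [simp]: "nbr_indices E \<sigma> 0 w = []"
  by (simp add: nbr_indices_def)

lemma nbr_indices_Suc [simp]:
  "nbr_indices E \<sigma> (Suc k) w = nbr_indices E \<sigma> k w @ (if {\<sigma> ! k, w} \<in> E then [k] else [])"
  by (simp add: nbr_indices_def)

lemma nbr_indices_swap_at:
  assumes "Suc i < k" "k \<le> length \<sigma>" and "{\<sigma> ! i, w} \<notin> E \<or> {\<sigma> ! Suc i, w} \<notin> E"
  shows "nbr_indices E (swap_at i \<sigma>) k w = map (transpose i (Suc i)) (nbr_indices E \<sigma> k w)"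
proof (rule strict_sorted_equal)
  let ?t = "transpose i (Suc i)"
  show "sorted_wrt (<) (nbr_indices E (swap_at i \<sigma>) k w)"
    by (simp add: nbr_indices_def sorted_wrt_filter)
  have "sorted_wrt (\<lambda>u v. ?t u < ?t v) (nbr_indices E \<sigma> k w)"
    by (rule sorted_wrt_mono_rel[of _ "(<)"])
      (use assms in \<open>auto simp: set_nbr_indices transpose_def nbr_indices_def sorted_wrt_filter\<close>)
  then show "sorted_wrt (<) (map ?t (nbr_indices E \<sigma> k w))"
    by (simp add: sorted_wrt_map)
  show "set (nbr_indices E (swap_at i \<sigma>) k w) = set (map ?t (nbr_indices E \<sigma> k w))"
  proof (rule set_eqI)
    fix j
    have "j \<in> set (map ?t (nbr_indices E \<sigma> k w)) \<longleftrightarrow> ?t j < k \<and> {\<sigma> ! ?t j, w} \<in> E"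
      by (simp only: set_map in_transpose_image_iff set_nbr_indices mem_Collect_eq)
    also have "\<dots> \<longleftrightarrow> j < k \<and> {swap_at i \<sigma> ! j, w} \<in> E"
      using assms(1,2) by (auto simp: nth_swap_at transpose_def)
    finally show "j \<in> set (nbr_indices E (swap_at i \<sigma>) k w) \<longleftrightarrow> j \<in> set (map ?t (nbr_indices E \<sigma> k w))"
      by (simp add: set_nbr_indices)
  qed
qed

lemma dfs_label_unvisited:
  "w \<notin> set (take k \<sigma>) \<Longrightarrow>
   dfs_label E s \<sigma> k w = map Suc (rev (nbr_indices E \<sigma> k w)) @ (if w = s then [0] else [])"
  by (induction k) (auto dest: not_in_take_SucD)

lemma bfs_label_unvisited:
  "w \<notin> set (take k \<sigma>) \<Longrightarrow>
   bfs_label n E s \<sigma> k w = (if w = s then [n] else []) @ map (\<lambda>i. n - Suc i) (nbr_indices E \<sigma> k w)"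
  by (induction k) (auto dest: not_in_take_SucD)

text \<open>Comparing two labels only depends on the relative order of the visited neighbours.\<close>

lemma search_label_reindex_less_iff:
  assumes k: "k \<le> card V"
    and unvisited: "w1 \<notin> set (take k \<sigma>)" "w2 \<notin> set (take k \<sigma>)"
      "w1 \<notin> set (take k \<tau>)" "w2 \<notin> set (take k \<tau>)" "w1 \<noteq> s" "w2 \<noteq> s"
    and reindex: "nbr_indices E \<tau> k w1 = map t (nbr_indices E \<sigma> k w1)"
      "nbr_indices E \<tau> k w2 = map t (nbr_indices E \<sigma> k w2)"
    and mono: "\<forall>u\<in>set (nbr_indices E \<sigma> k w1) \<union> set (nbr_indices E \<sigma> k w2).
      \<forall>v\<in>set (nbr_indices E \<sigma> k w1) \<union> set (nbr_indices E \<sigma> k w2). t u < t v \<longleftrightarrow> u < v"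
  shows "search_label P V E s \<tau> k w1 < search_label P V E s \<tau> k w2 \<longleftrightarrow>
         search_label P V E s \<sigma> k w1 < search_label P V E s \<sigma> k w2"
proof -
  define X1 X2 where "X1 = nbr_indices E \<sigma> k w1" and "X2 = nbr_indices E \<sigma> k w2"
  have "set (map t X1) \<union> set (map t X2) \<subseteq> {..<k}" "set X1 \<union> set X2 \<subseteq> {..<k}"
    unfolding X1_def X2_def reindex[symmetric] by (auto simp: set_nbr_indices)
  then have bounded: "u < k" "t u < k" if "u \<in> set X1 \<union> set X2" for u
    using that by auto
  have dfs: "map Suc (rev (map t X1)) < map Suc (rev (map t X2)) \<longleftrightarrow>
             map Suc (rev X1) < map Suc (rev X2)"
    unfolding rev_map map_map
    by (rule map_less_map_iff) (use mono in \<open>auto simp: X1_def X2_def\<close>)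
  have bfs: "map (\<lambda>i. card V - Suc i) (map t X1) < map (\<lambda>i. card V - Suc i) (map t X2) \<longleftrightarrow>
             map (\<lambda>i. card V - Suc i) X1 < map (\<lambda>i. card V - Suc i) X2"
    unfolding map_map
  proof (rule map_less_map_iff, intro ballI)
    fix u v assume "u \<in> set X1 \<union> set X2" "v \<in> set X1 \<union> set X2"
    moreover from this have "t v < t u \<longleftrightarrow> v < u"
      using mono by (auto simp: X1_def X2_def)
    ultimately show "((\<lambda>i. card V - Suc i) \<circ> t) u < ((\<lambda>i. card V - Suc i) \<circ> t) v \<longleftrightarrow>
                     card V - Suc u < card V - Suc v"
      using bounded k by fastforce
  qed
  show ?thesis
    using dfs bfs unvisited reindex
    by (cases P) (simp_all add: search_label_def dfs_label_unvisited bfs_label_unvisited X1_def X2_def)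
qed

lemma search_label_cong_take:
  assumes "take k \<sigma> = take k \<tau>"
  shows "search_label P V E s \<sigma> k w = search_label P V E s \<tau> k w"
proof -
  have "dfs_label E s \<sigma> k w = dfs_label E s \<tau> k w \<and> bfs_label n E s \<sigma> k w = bfs_label n E s \<tau> k w" for n
    using assms by (induction k) (auto dest: take_Suc_eqD)
  then show ?thesis
    by (cases P) (simp_all add: search_label_def)
qed

lemma search_label_Suc_nonadjacent:
  "{\<sigma> ! k, w} \<notin> E \<Longrightarrow> search_label P V E s \<sigma> (Suc k) w = search_label P V E s \<sigma> k w"
  by (cases P) (simp_all add: search_label_def)

lemma ex_lex_max_unvisited:
  fixes P :: search and E :: "'a set set" and s :: 'a
  assumes \<sigma>: "distinct \<sigma>" "set \<sigma> = V" and k: "k < length \<sigma>"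
  obtains m where "k \<le> m" "m < length \<sigma>"
    "\<And>w. w \<in> V - set (take k \<sigma>) \<Longrightarrow> search_label P V E s \<sigma> k w \<le> search_label P V E s \<sigma> k (\<sigma> ! m)"
proof -
  let ?U = "V - set (take k \<sigma>)" and ?L = "search_label P V E s \<sigma> k"
  have "\<sigma> ! k \<in> ?U"
    using nth_notin_take[OF \<sigma>(1) order_refl k] nth_mem[OF k] \<sigma>(2) by blast
  moreover have "finite ?U"
    using \<sigma>(2) by auto
  ultimately have "Max (?L ` ?U) \<in> ?L ` ?U"
    by (intro Max_in) auto
  then obtain x where x: "x \<in> ?U" "?L x = Max (?L ` ?U)"
    by (metis imageE)
  obtain m where m: "m < length \<sigma>" "\<sigma> ! m = x"
    using x(1) \<sigma>(2) by (auto simp: in_set_conv_nth)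
  have "\<sigma> ! m \<in> set (take k \<sigma>)" if "m < k"
    using that m(1) by (auto simp: in_set_conv_nth intro!: exI[of _ m])
  then have "k \<le> m"
    using x(1) m(2) by (meson DiffD2 not_le)
  moreover have "?L w \<le> ?L (\<sigma> ! m)" if "w \<in> ?U" for w
    using Max_ge[OF finite_imageI[OF \<open>finite ?U\<close>] imageI[OF that]] x(2) m(2) by simp
  ultimately show thesis
    using that m(1) by blast
qed

section \<open>Components of induced subgraphs\<close>

lemma same_comp_refl: "a \<in> U \<Longrightarrow> same_comp E U a a"
  by (simp add: same_comp_def)

lemma same_comp_sym: "same_comp E U a b \<Longrightarrow> same_comp E U b a"
proof -
  have "sym (induced_rel E U)"
    by (auto simp: sym_def induced_rel_def insert_commute)
  then show "same_comp E U a b \<Longrightarrow> same_comp E U b a"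
    unfolding same_comp_def by (metis rtrancl_converseI sym_conv_converse_eq)
qed

lemma same_comp_trans: "same_comp E U a b \<Longrightarrow> same_comp E U b c \<Longrightarrow> same_comp E U a c"
  by (auto simp: same_comp_def)

lemma same_comp_edge: "same_comp E U a b \<Longrightarrow> c \<in> U \<Longrightarrow> {b, c} \<in> E \<Longrightarrow> same_comp E U a c"
  unfolding same_comp_def induced_rel_def by (auto intro: rtrancl_into_rtrancl)

lemma same_comp_mono: "same_comp E U a b \<Longrightarrow> U \<subseteq> U' \<Longrightarrow> same_comp E U' a b"
proof -
  assume "U \<subseteq> U'"
  then have "induced_rel E U \<subseteq> induced_rel E U'"
    by (auto simp: induced_rel_def)
  then show "same_comp E U a b \<Longrightarrow> same_comp E U' a b"
    using \<open>U \<subseteq> U'\<close> unfolding same_comp_def by (meson rtrancl_mono subsetD)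
qed

lemma not_same_comp_subset:
  assumes "W \<subseteq> U" "same_comp E U x b" "\<not> same_comp E U x a"
  shows "\<not> same_comp E W a b"
proof
  assume "same_comp E W a b"
  then have "same_comp E U b a"
    using assms(1) by (rule same_comp_sym[OF same_comp_mono])
  with assms(2) have "same_comp E U x a"
    by (rule same_comp_trans)
  with assms(3) show False
    by contradiction
qed

lemma same_comp_Diff:
  assumes "same_comp E U a b" and "\<not> same_comp E U a c"
  shows "same_comp E (U - {c}) a b"
proof -
  have "(a, b) \<in> (induced_rel E U)\<^sup>*"
    using assms(1) by (simp add: same_comp_def)
  then have "(a, b) \<in> (induced_rel E (U - {c}))\<^sup>* \<and> b \<noteq> c"
  proof (induction rule: rtrancl_induct)
    case base
    then show ?case
      using assms same_comp_refl unfolding same_comp_def by blast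
  next
    case (step y z)
    then have "z \<noteq> c"
      using assms unfolding same_comp_def induced_rel_def by (auto intro: rtrancl_into_rtrancl)
    then have "(y, z) \<in> induced_rel E (U - {c})"
      using step by (auto simp: induced_rel_def)
    then show ?case
      using step \<open>z \<noteq> c\<close> by (auto intro: rtrancl_into_rtrancl)
  qed
  then show ?thesis
    using assms unfolding same_comp_def by auto
qed

section \<open>Label-maximal steps\<close>

definition lex_max_step :: "search \<Rightarrow> 'a set \<Rightarrow> 'a set set \<Rightarrow> 'a \<Rightarrow> 'a list \<Rightarrow> nat \<Rightarrow> bool" where
  "lex_max_step P V E s \<sigma> k \<longleftrightarrow> (\<forall>w \<in> V - set (take k \<sigma>).
     \<not> search_label P V E s \<sigma> k (\<sigma> ! k) < search_label P V E s \<sigma> k w)"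

definition comp_lex_max_step :: "search \<Rightarrow> 'a set \<Rightarrow> 'a set set \<Rightarrow> 'a \<Rightarrow> 'a list \<Rightarrow> nat \<Rightarrow> bool" where
  "comp_lex_max_step P V E s \<sigma> k \<longleftrightarrow> (\<forall>w. same_comp E (V - set (take k \<sigma>)) (\<sigma> ! k) w \<longrightarrow>
     \<not> search_label P V E s \<sigma> k (\<sigma> ! k) < search_label P V E s \<sigma> k w)"

lemma search_order_iff:
  "search_order P V E s \<sigma> \<longleftrightarrow> distinct \<sigma> \<and> set \<sigma> = V \<and>
     (\<forall>k<length \<sigma>. if is_comp_search P then comp_lex_max_step P V E s \<sigma> k
                                          else lex_max_step P V E s \<sigma> k)"
  by (auto simp: search_order_def lex_max_step_def comp_lex_max_step_def lex_less_def list_less_def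
      same_comp_def Let_def)

lemma lex_max_step_imp_comp_lex_max_step: "lex_max_step P V E s \<sigma> k \<Longrightarrow> comp_lex_max_step P V E s \<sigma> k"
  by (auto simp: lex_max_step_def comp_lex_max_step_def same_comp_def)

lemma lex_max_step_0: "\<sigma> \<noteq> [] \<Longrightarrow> hd \<sigma> = s \<Longrightarrow> lex_max_step P V E s \<sigma> 0"
  by (cases P) (auto simp: lex_max_step_def search_label_def hd_conv_nth)

lemma lex_max_step_cong_take:
  assumes "take k \<sigma> = take k \<tau>" "j < k"
  shows "lex_max_step P V E s \<sigma> j \<longleftrightarrow> lex_max_step P V E s \<tau> j"
proof -
  have "take j \<sigma> = take j \<tau>" "\<sigma> ! j = \<tau> ! j"
    using take_Suc_eqD[OF take_eq_take_le[OF assms(1)]] assms(2) by simp_all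
  moreover from this have "search_label P V E s \<sigma> j = search_label P V E s \<tau> j"
    by (auto intro: search_label_cong_take)
  ultimately show ?thesis
    unfolding lex_max_step_def by simp
qed

lemma comp_lex_max_step_cong_take:
  assumes "take k \<sigma> = take k \<tau>" "j < k"
  shows "comp_lex_max_step P V E s \<sigma> j \<longleftrightarrow> comp_lex_max_step P V E s \<tau> j"
proof -
  have "take j \<sigma> = take j \<tau>" "\<sigma> ! j = \<tau> ! j"
    using take_Suc_eqD[OF take_eq_take_le[OF assms(1)]] assms(2) by simp_all
  moreover from this have "search_label P V E s \<sigma> j = search_label P V E s \<tau> j"
    by (auto intro: search_label_cong_take)
  ultimately show ?thesis
    unfolding comp_lex_max_step_def by simp
qed

section \<open>Swapping consecutive vertices\<close>

lemma L_tree_edges_swap_at_subset: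
  assumes i: "Suc i < length \<sigma>"
    and nonadjacent: "{\<sigma> ! i, \<sigma> ! Suc i} \<notin> E"
    and no_common_later_nbr:
      "\<And>p. Suc i < p \<Longrightarrow> p < length \<sigma> \<Longrightarrow> {\<sigma> ! i, \<sigma> ! p} \<notin> E \<or> {\<sigma> ! Suc i, \<sigma> ! p} \<notin> E"
  shows "L_tree_edges E (swap_at i \<sigma>) \<subseteq> L_tree_edges E \<sigma>"
proof
  let ?t = "transpose i (Suc i)" and ?\<tau> = "swap_at i \<sigma>"
  have nth: "?\<tau> ! j = \<sigma> ! ?t j" if "j < length \<sigma>" for j
    using i that by (simp add: nth_swap_at)
  fix e assume "e \<in> L_tree_edges E ?\<tau>"
  then obtain p q where e: "e = {?\<tau> ! p, ?\<tau> ! q}" "p < length \<sigma>" "q < p" "{?\<tau> ! q, ?\<tau> ! p} \<in> E"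
    and last: "\<And>k. q < k \<Longrightarrow> k < p \<Longrightarrow> {?\<tau> ! k, ?\<tau> ! p} \<notin> E"
    unfolding L_tree_edges_def by auto
  have edge: "{\<sigma> ! ?t q, \<sigma> ! ?t p} \<in> E"
    using e nth by simp
  have "?t q < ?t p"
    using e(3) edge nonadjacent by (auto simp: transpose_def insert_commute split: if_splits)
  moreover have "?t p < length \<sigma>"
    using i e(2) by (auto simp: transpose_def)
  moreover have "{\<sigma> ! k, \<sigma> ! ?t p} \<notin> E" if k: "?t q < k" "k < ?t p" for k
  proof -
    from k e(3) show ?thesis
    proof (cases rule: transpose_Suc_between_cases)
      case 1
      then show ?thesis
        using last[of "?t k"] nth e(2) by simp
    next
      case 2
      then show ?thesis
        using no_common_later_nbr[of "?t p"] edge k \<open>?t p < length \<sigma>\<close> by auto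
    next
      case 3
      then show ?thesis
        using nonadjacent by simp
    qed
  qed
  ultimately show "e \<in> L_tree_edges E \<sigma>"
    unfolding L_tree_edges_def using e nth edge
    by (intro CollectI exI[of _ "?t p"] exI[of _ "?t q"]) (auto simp: insert_commute)
qed

lemma L_tree_edges_swap_at:
  assumes i: "Suc i < length \<sigma>"
    and nonadjacent: "{\<sigma> ! i, \<sigma> ! Suc i} \<notin> E"
    and no_common_later_nbr:
      "\<And>p. Suc i < p \<Longrightarrow> p < length \<sigma> \<Longrightarrow> {\<sigma> ! i, \<sigma> ! p} \<notin> E \<or> {\<sigma> ! Suc i, \<sigma> ! p} \<notin> E"
  shows "L_tree_edges E (swap_at i \<sigma>) = L_tree_edges E \<sigma>"
proof
  show "L_tree_edges E (swap_at i \<sigma>) \<subseteq> L_tree_edges E \<sigma>"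
    using assms by (rule L_tree_edges_swap_at_subset)
  have "L_tree_edges E (swap_at i (swap_at i \<sigma>)) \<subseteq> L_tree_edges E (swap_at i \<sigma>)"
    using assms by (intro L_tree_edges_swap_at_subset) (auto simp: nth_swap_at insert_commute)
  then show "L_tree_edges E \<sigma> \<subseteq> L_tree_edges E (swap_at i \<sigma>)"
    using i by simp
qed

context
  fixes V :: "'a set" and E :: "'a set set" and s :: 'a and \<sigma> :: "'a list" and i :: nat
  assumes distinct: "distinct \<sigma>" and set_\<sigma>: "set \<sigma> = V" and hd_\<sigma>: "hd \<sigma> = s"
    and Suc_i_less: "Suc i < length \<sigma>"
    and separated: "\<not> same_comp E (V - set (take i \<sigma>)) (\<sigma> ! i) (\<sigma> ! Suc i)"
begin

lemma nth_unvisited: "k \<le> j \<Longrightarrow> j < length \<sigma> \<Longrightarrow> \<sigma> ! j \<in> V - set (take k \<sigma>)"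
  using nth_notin_take[OF distinct] nth_mem set_\<sigma> by blast

lemma swapped_unvisited: "\<sigma> ! i \<in> V - set (take i \<sigma>)" "\<sigma> ! Suc i \<in> V - set (take i \<sigma>)"
  using Suc_i_less by (intro nth_unvisited; simp)+

lemma swapped_nonadjacent: "{\<sigma> ! i, \<sigma> ! Suc i} \<notin> E"
proof
  assume "{\<sigma> ! i, \<sigma> ! Suc i} \<in> E"
  then have "same_comp E (V - set (take i \<sigma>)) (\<sigma> ! i) (\<sigma> ! Suc i)"
    by (rule same_comp_edge[OF same_comp_refl[OF swapped_unvisited(1)] swapped_unvisited(2)])
  with separated show False
    by contradiction
qed

lemma comp_of_second_nonadjacent_first:
  assumes "same_comp E (V - set (take i \<sigma>)) (\<sigma> ! Suc i) w"
  shows "{\<sigma> ! i, w} \<notin> E"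
proof
  assume "{\<sigma> ! i, w} \<in> E"
  then have "same_comp E (V - set (take i \<sigma>)) (\<sigma> ! Suc i) (\<sigma> ! i)"
    by (simp add: same_comp_edge[OF assms swapped_unvisited(1)] insert_commute)
  with separated show False
    using same_comp_sym by metis
qed

lemma comp_of_first_nonadjacent_second:
  assumes "same_comp E (V - set (take i \<sigma>)) (\<sigma> ! i) w"
  shows "{\<sigma> ! Suc i, w} \<notin> E"
proof
  assume "{\<sigma> ! Suc i, w} \<in> E"
  then have "same_comp E (V - set (take i \<sigma>)) (\<sigma> ! i) (\<sigma> ! Suc i)"
    by (simp add: same_comp_edge[OF assms swapped_unvisited(2)] insert_commute)
  with separated show False
    by contradiction
qed

lemma swapped_no_common_comp:
  assumes "same_comp E (V - set (take i \<sigma>)) u v" "{\<sigma> ! i, u} \<in> E" "{\<sigma> ! Suc i, v} \<in> E"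
  shows False
proof -
  have "u \<in> V - set (take i \<sigma>)"
    using assms(1) by (simp add: same_comp_def)
  then have "same_comp E (V - set (take i \<sigma>)) (\<sigma> ! i) u"
    using assms(2) by (rule same_comp_edge[OF same_comp_refl[OF swapped_unvisited(1)]])
  then have "same_comp E (V - set (take i \<sigma>)) (\<sigma> ! i) v"
    using assms(1) by (rule same_comp_trans)
  then show False
    using assms(3) comp_of_first_nonadjacent_second by blast
qed

lemma L_tree_edges_swap_separated: "L_tree_edges E (swap_at i \<sigma>) = L_tree_edges E \<sigma>"
proof (rule L_tree_edges_swap_at[OF Suc_i_less swapped_nonadjacent])
  fix p assume "Suc i < p" "p < length \<sigma>"
  then have "same_comp E (V - set (take i \<sigma>)) (\<sigma> ! p) (\<sigma> ! p)"
    by (intro same_comp_refl nth_unvisited) auto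
  then show "{\<sigma> ! i, \<sigma> ! p} \<notin> E \<or> {\<sigma> ! Suc i, \<sigma> ! p} \<notin> E"
    using swapped_no_common_comp by blast
qed

lemma comp_lex_max_step_swap_at_before:
  "k < i \<Longrightarrow> comp_lex_max_step P V E s (swap_at i \<sigma>) k \<longleftrightarrow> comp_lex_max_step P V E s \<sigma> k"
  by (rule comp_lex_max_step_cong_take[OF take_swap_at[OF order_refl]])

lemma comp_lex_max_step_swap_at_first:
  assumes "comp_lex_max_step P V E s \<sigma> (Suc i)"
  shows "comp_lex_max_step P V E s (swap_at i \<sigma>) i"
  unfolding comp_lex_max_step_def
proof (intro allI impI)
  let ?L = "search_label P V E s \<sigma>" and ?W = "V - set (take i \<sigma>)"
  have take: "take i (swap_at i \<sigma>) = take i \<sigma>" and first: "swap_at i \<sigma> ! i = \<sigma> ! Suc i"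
    using Suc_i_less by (simp_all add: take_swap_at nth_swap_at)
  fix w assume "same_comp E (V - set (take i (swap_at i \<sigma>))) (swap_at i \<sigma> ! i) w"
  then have comp: "same_comp E ?W (\<sigma> ! Suc i) w"
    by (simp add: take first)
  then have "same_comp E (?W - {\<sigma> ! i}) (\<sigma> ! Suc i) w"
    using separated same_comp_sym by (metis same_comp_Diff)
  moreover have "?W - {\<sigma> ! i} = V - set (take (Suc i) \<sigma>)"
    using Suc_i_less by (auto simp: take_Suc_conv_app_nth)
  ultimately have "\<not> ?L (Suc i) (\<sigma> ! Suc i) < ?L (Suc i) w"
    using assms by (simp add: comp_lex_max_step_def)
  moreover have "?L (Suc i) v = ?L i v" if "{\<sigma> ! i, v} \<notin> E" for v
    using that by (rule search_label_Suc_nonadjacent)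
  ultimately have "\<not> ?L i (\<sigma> ! Suc i) < ?L i w"
    using swapped_nonadjacent comp_of_second_nonadjacent_first[OF comp] by simp
  then show "\<not> search_label P V E s (swap_at i \<sigma>) i (swap_at i \<sigma> ! i)
               < search_label P V E s (swap_at i \<sigma>) i w"
    using search_label_cong_take[OF take] by (simp add: first)
qed

lemma comp_lex_max_step_swap_at_second:
  assumes "comp_lex_max_step P V E s \<sigma> i"
  shows "comp_lex_max_step P V E s (swap_at i \<sigma>) (Suc i)"
  unfolding comp_lex_max_step_def
proof (intro allI impI)
  let ?\<tau> = "swap_at i \<sigma>" and ?W = "V - set (take i \<sigma>)"
  have take: "take i ?\<tau> = take i \<sigma>" and first: "?\<tau> ! i = \<sigma> ! Suc i"
    and second: "?\<tau> ! Suc i = \<sigma> ! i"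
    using Suc_i_less by (simp_all add: take_swap_at nth_swap_at)
  have unvisited: "V - set (take (Suc i) ?\<tau>) = ?W - {\<sigma> ! Suc i}"
    using Suc_i_less set_take_Suc_swap_at by blast
  fix w assume "same_comp E (V - set (take (Suc i) ?\<tau>)) (?\<tau> ! Suc i) w"
  then have "same_comp E (?W - {\<sigma> ! Suc i}) (\<sigma> ! i) w"
    by (simp only: unvisited second)
  then have comp: "same_comp E ?W (\<sigma> ! i) w"
    by (rule same_comp_mono) auto
  then have "\<not> search_label P V E s \<sigma> i (\<sigma> ! i) < search_label P V E s \<sigma> i w"
    using assms by (simp add: comp_lex_max_step_def)
  then have "\<not> search_label P V E s ?\<tau> i (\<sigma> ! i) < search_label P V E s ?\<tau> i w"
    using search_label_cong_take[OF take] by simp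
  moreover have "search_label P V E s ?\<tau> (Suc i) v = search_label P V E s ?\<tau> i v"
    if "{\<sigma> ! Suc i, v} \<notin> E" for v
    using that by (simp add: search_label_Suc_nonadjacent first)
  ultimately show "\<not> search_label P V E s ?\<tau> (Suc i) (?\<tau> ! Suc i) < search_label P V E s ?\<tau> (Suc i) w"
    using swapped_nonadjacent comp_of_first_nonadjacent_second[OF comp]
    by (simp add: second insert_commute)
qed

lemma search_label_swap_at_less_iff:
  assumes comp: "same_comp E (V - set (take k \<sigma>)) u v" and k: "Suc i < k" "k \<le> length \<sigma>"
  shows "search_label P V E s (swap_at i \<sigma>) k u < search_label P V E s (swap_at i \<sigma>) k v \<longleftrightarrow>
         search_label P V E s \<sigma> k u < search_label P V E s \<sigma> k v"
proof -
  let ?\<tau> = "swap_at i \<sigma>" and ?t = "transpose i (Suc i)" and ?N = "\<lambda>w. set (nbr_indices E \<sigma> k w)"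
  let ?W = "V - set (take i \<sigma>)"
  have unvisited: "u \<in> V - set (take k \<sigma>)" "v \<in> V - set (take k \<sigma>)"
    using comp by (simp_all add: same_comp_def)
  have "V - set (take k \<sigma>) \<subseteq> ?W"
    using set_take_subset_set_take[of i k \<sigma>] k by auto
  moreover have "same_comp E (V - set (take k \<sigma>)) x y" if "x \<in> {u, v}" "y \<in> {u, v}" for x y
    using that comp same_comp_sym[OF comp] same_comp_refl[OF unvisited(1)] same_comp_refl[OF unvisited(2)]
    by auto
  ultimately have comp_W: "same_comp E ?W x y" if "x \<in> {u, v}" "y \<in> {u, v}" for x y
    using that by (blast intro: same_comp_mono)
  \<comment> \<open>Hence at most one of the swapped vertices has neighbours in \<open>{u, v}\<close>.\<close>
  have reindex: "nbr_indices E ?\<tau> k w = map ?t (nbr_indices E \<sigma> k w)" if "w \<in> {u, v}" for w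
    using swapped_no_common_comp[OF comp_W[OF that that]] k by (intro nbr_indices_swap_at) auto
  have "\<not> (i \<in> ?N u \<union> ?N v \<and> Suc i \<in> ?N u \<union> ?N v)"
  proof
    assume "i \<in> ?N u \<union> ?N v \<and> Suc i \<in> ?N u \<union> ?N v"
    then obtain x y where "x \<in> {u, v}" "{\<sigma> ! i, x} \<in> E" "y \<in> {u, v}" "{\<sigma> ! Suc i, y} \<in> E"
      by (auto simp: set_nbr_indices)
    then show False
      using swapped_no_common_comp comp_W by blast
  qed
  then have mono: "\<forall>x\<in>?N u \<union> ?N v. \<forall>y\<in>?N u \<union> ?N v. ?t x < ?t y \<longleftrightarrow> x < y"
    by (intro ballI transpose_Suc_less_iff) auto
  have "s \<in> set (take k \<sigma>)"
    using hd_\<sigma> k Suc_i_less hd_in_set[of "take k \<sigma>"] by (cases \<sigma>) (simp_all add: hd_take)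
  moreover have "k \<le> card V"
    using k distinct set_\<sigma> distinct_card by fastforce
  moreover have "set (take k ?\<tau>) = set (take k \<sigma>)"
    using k Suc_i_less by (simp add: set_take_swap_at)
  ultimately show ?thesis
    using mono reindex unvisited by (intro search_label_reindex_less_iff) auto
qed

lemma comp_lex_max_step_swap_at_later:
  assumes max: "comp_lex_max_step P V E s \<sigma> k" and k: "Suc i < k" "k < length \<sigma>"
  shows "comp_lex_max_step P V E s (swap_at i \<sigma>) k"
  unfolding comp_lex_max_step_def
proof (intro allI impI)
  have swapped: "set (take k (swap_at i \<sigma>)) = set (take k \<sigma>)" "swap_at i \<sigma> ! k = \<sigma> ! k"
    using k Suc_i_less by (simp_all add: set_take_swap_at nth_swap_at)
  fix w assume "same_comp E (V - set (take k (swap_at i \<sigma>))) (swap_at i \<sigma> ! k) w"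
  then have comp: "same_comp E (V - set (take k \<sigma>)) (\<sigma> ! k) w"
    by (simp only: swapped)
  then show "\<not> search_label P V E s (swap_at i \<sigma>) k (swap_at i \<sigma> ! k)
               < search_label P V E s (swap_at i \<sigma>) k w"
    using max search_label_swap_at_less_iff[OF comp k(1)] k(2) by (simp add: comp_lex_max_step_def swapped)
qed

lemma comp_lex_max_steps_swap_at:
  assumes "\<forall>k<length \<sigma>. comp_lex_max_step P V E s \<sigma> k"
  shows "\<forall>k<length \<sigma>. comp_lex_max_step P V E s (swap_at i \<sigma>) k"
proof (intro allI impI)
  fix k assume k: "k < length \<sigma>"
  consider "k < i" | "k = i" | "k = Suc i" | "Suc i < k"
    by linarith
  then show "comp_lex_max_step P V E s (swap_at i \<sigma>) k"
  proof cases
    case 1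
    then show ?thesis
      using assms k by (simp add: comp_lex_max_step_swap_at_before)
  next
    case 2
    then show ?thesis
      using assms Suc_i_less by (simp add: comp_lex_max_step_swap_at_first)
  next
    case 3
    then show ?thesis
      using assms Suc_i_less by (simp add: comp_lex_max_step_swap_at_second)
  qed (use assms k comp_lex_max_step_swap_at_later in blast)
qed

end

section \<open>From component orders to search orders\<close>

text \<open>
  The labels are those of the plain search P: for P = LexDFS (LexBFS) these are the
  CompLexDFS (CompLexBFS) orders started at s.
\<close>

definition comp_order_from :: "search \<Rightarrow> 'a set \<Rightarrow> 'a set set \<Rightarrow> 'a \<Rightarrow> 'a list \<Rightarrow> bool" where
  "comp_order_from P V E s \<sigma> \<longleftrightarrow> distinct \<sigma> \<and> set \<sigma> = V \<and> \<sigma> \<noteq> [] \<and> hd \<sigma> = s \<and>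
     (\<forall>k<length \<sigma>. comp_lex_max_step P V E s \<sigma> k)"

lemma length_comp_order_from: "comp_order_from P V E s \<sigma> \<Longrightarrow> length \<sigma> = card V"
  by (auto simp: comp_order_from_def distinct_card)

lemma comp_order_from_swap_at:
  assumes order: "comp_order_from P V E s \<sigma>" and i: "0 < i" "Suc i < length \<sigma>"
    and separated: "\<not> same_comp E (V - set (take i \<sigma>)) (\<sigma> ! i) (\<sigma> ! Suc i)"
  shows "comp_order_from P V E s (swap_at i \<sigma>)" "L_tree_edges E (swap_at i \<sigma>) = L_tree_edges E \<sigma>"
proof -
  have \<sigma>: "distinct \<sigma>" "set \<sigma> = V" "hd \<sigma> = s" "\<forall>k<length \<sigma>. comp_lex_max_step P V E s \<sigma> k"
    using order by (simp_all add: comp_order_from_def)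
  have "\<sigma> \<noteq> []" "swap_at i \<sigma> \<noteq> []"
    using i by (auto simp flip: length_greater_0_conv)
  then have "hd (swap_at i \<sigma>) = hd \<sigma>"
    using i by (simp add: hd_conv_nth nth_swap_at)
  moreover have "\<forall>k<length \<sigma>. comp_lex_max_step P V E s (swap_at i \<sigma>) k"
    using \<sigma>(1-3) i(2) separated \<sigma>(4) by (rule comp_lex_max_steps_swap_at)
  ultimately show "comp_order_from P V E s (swap_at i \<sigma>)"
    using \<sigma> i \<open>swap_at i \<sigma> \<noteq> []\<close> by (simp add: comp_order_from_def)
  show "L_tree_edges E (swap_at i \<sigma>) = L_tree_edges E \<sigma>"
    using \<sigma>(1-3) i(2) separated by (rule L_tree_edges_swap_separated)
qed

lemma comp_order_from_bring_forward:
  assumes "comp_order_from P V E s \<sigma>" "0 < k" "k \<le> m" "m < length \<sigma>"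
    and "same_comp E (V - set (take k \<sigma>)) x (\<sigma> ! m)"
  shows "\<exists>\<tau>. comp_order_from P V E s \<tau> \<and> take k \<tau> = take k \<sigma> \<and>
             same_comp E (V - set (take k \<sigma>)) x (\<tau> ! k) \<and> L_tree_edges E \<tau> = L_tree_edges E \<sigma>"
  using assms
proof (induction m arbitrary: \<sigma>)
  case 0
  then show ?case by simp
next
  case (Suc m)
  let ?U = "V - set (take k \<sigma>)"
  consider "k = Suc m" | "k \<le> m" "same_comp E ?U x (\<sigma> ! m)" | "k \<le> m" "\<not> same_comp E ?U x (\<sigma> ! m)"
    using Suc.prems(3) le_Suc_eq by blast
  then show ?case
  proof cases
    case 1
    then show ?thesis
      using Suc.prems(1,5) by (intro exI[of _ \<sigma>]) simp
  next
    case 2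
    then show ?thesis
      using Suc.IH[OF Suc.prems(1,2) 2(1) _ 2(2)] Suc.prems(4) by simp
  next
    case 3
    have "V - set (take m \<sigma>) \<subseteq> ?U"
      using set_take_subset_set_take[OF 3(1), of \<sigma>] by blast
    then have "\<not> same_comp E (V - set (take m \<sigma>)) (\<sigma> ! m) (\<sigma> ! Suc m)"
      using Suc.prems(5) 3(2) by (rule not_same_comp_subset)
    then have swapped: "comp_order_from P V E s (swap_at m \<sigma>)"
      "L_tree_edges E (swap_at m \<sigma>) = L_tree_edges E \<sigma>"
      using comp_order_from_swap_at[OF Suc.prems(1)] Suc.prems(2,4) 3(1) by auto
    have take: "take k (swap_at m \<sigma>) = take k \<sigma>"
      using 3(1) by (rule take_swap_at)
    have "swap_at m \<sigma> ! m = \<sigma> ! Suc m"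
      using Suc.prems(4) by (simp add: nth_swap_at)
    then have "same_comp E (V - set (take k (swap_at m \<sigma>))) x (swap_at m \<sigma> ! m)"
      using Suc.prems(5) by (simp add: take)
    then obtain \<tau> where "comp_order_from P V E s \<tau>" "take k \<tau> = take k \<sigma>"
        "same_comp E ?U x (\<tau> ! k)" "L_tree_edges E \<tau> = L_tree_edges E (swap_at m \<sigma>)"
      using Suc.IH[OF swapped(1) Suc.prems(2) 3(1)] Suc.prems(4) take by auto
    then show ?thesis
      using swapped(2) by auto
  qed
qed

lemma comp_order_from_lex_max_prefix_Suc:
  assumes order: "comp_order_from P V E s \<sigma>" and prefix: "\<forall>j<k. lex_max_step P V E s \<sigma> j"
    and k: "k < length \<sigma>"
  shows "\<exists>\<tau>. comp_order_from P V E s \<tau> \<and> (\<forall>j\<le>k. lex_max_step P V E s \<tau> j) \<and>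
             L_tree_edges E \<tau> = L_tree_edges E \<sigma>"
proof (cases "k = 0")
  case True
  then show ?thesis
    using order lex_max_step_0[of \<sigma> s P V E] by (intro exI[of _ \<sigma>]) (auto simp: comp_order_from_def)
next
  case False
  let ?U = "V - set (take k \<sigma>)" and ?L = "search_label P V E s \<sigma> k"
  have \<sigma>: "distinct \<sigma>" "set \<sigma> = V"
    using order by (simp_all add: comp_order_from_def)
  obtain m where m: "k \<le> m" "m < length \<sigma>" and m_max: "\<And>w. w \<in> ?U \<Longrightarrow> ?L w \<le> ?L (\<sigma> ! m)"
    by (rule ex_lex_max_unvisited[OF \<sigma> k, where P = P and E = E and s = s]) auto
  have "\<sigma> ! m \<in> ?U"
    using nth_notin_take[OF \<sigma>(1) m] nth_mem[OF m(2)] \<sigma>(2) by blast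
  then have "same_comp E ?U (\<sigma> ! m) (\<sigma> ! m)"
    by (rule same_comp_refl)
  with False have "\<exists>\<tau>. comp_order_from P V E s \<tau> \<and> take k \<tau> = take k \<sigma> \<and>
      same_comp E ?U (\<sigma> ! m) (\<tau> ! k) \<and> L_tree_edges E \<tau> = L_tree_edges E \<sigma>"
    by (intro comp_order_from_bring_forward[OF order _ m]) simp_all
  then obtain \<tau> where \<tau>: "comp_order_from P V E s \<tau>" "take k \<tau> = take k \<sigma>"
      "same_comp E ?U (\<sigma> ! m) (\<tau> ! k)" "L_tree_edges E \<tau> = L_tree_edges E \<sigma>"
    by blast
  have labels: "search_label P V E s \<tau> k = ?L"
    by (rule ext, rule search_label_cong_take, rule \<tau>(2))
  have "k < length \<tau>"
    using length_comp_order_from[OF \<tau>(1)] length_comp_order_from[OF order] k by simp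
  then have "comp_lex_max_step P V E s \<tau> k"
    using \<tau>(1) by (simp add: comp_order_from_def)
  moreover have "same_comp E (V - set (take k \<tau>)) (\<tau> ! k) (\<sigma> ! m)"
    using \<tau>(2,3) by (simp add: same_comp_sym)
  ultimately have "\<not> ?L (\<tau> ! k) < ?L (\<sigma> ! m)"
    using labels by (simp add: comp_lex_max_step_def)
  then have "lex_max_step P V E s \<tau> k"
    using m_max \<tau>(2) labels by (auto simp: lex_max_step_def) (meson not_less order_trans)
  moreover have "lex_max_step P V E s \<tau> j" if "j < k" for j
    using prefix lex_max_step_cong_take[OF \<tau>(2) that] that by simp
  ultimately have "\<forall>j\<le>k. lex_max_step P V E s \<tau> j"
    by (auto simp: le_less)
  then show ?thesis
    using \<tau>(1,4) by blast
qed

lemma comp_order_from_lex_max_prefix: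
  assumes "comp_order_from P V E s \<sigma>" "d \<le> length \<sigma>"
  shows "\<exists>\<tau>. comp_order_from P V E s \<tau> \<and> (\<forall>j<d. lex_max_step P V E s \<tau> j) \<and>
             L_tree_edges E \<tau> = L_tree_edges E \<sigma>"
  using assms(2)
proof (induction d)
  case 0
  then show ?case
    using assms(1) by auto
next
  case (Suc d)
  then obtain \<tau> where \<tau>: "comp_order_from P V E s \<tau>" "\<forall>j<d. lex_max_step P V E s \<tau> j"
      "L_tree_edges E \<tau> = L_tree_edges E \<sigma>"
    by auto
  moreover have "d < length \<tau>"
    using \<tau>(1) assms(1) Suc.prems by (simp add: length_comp_order_from)
  ultimately show ?case
    using comp_order_from_lex_max_prefix_Suc[of P V E s \<tau> d] by (metis less_Suc_eq_le)
qed

lemma is_L_tree_comp_search_iff: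
  assumes "\<not> is_comp_search P" "is_comp_search Q" "search_label Q V E s = search_label P V E s"
  shows "is_L_tree P V E s T \<longleftrightarrow> is_L_tree Q V E s T"
proof -
  have "comp_lex_max_step Q V E s \<sigma> k = comp_lex_max_step P V E s \<sigma> k" for \<sigma> k
    by (simp add: comp_lex_max_step_def assms(3))
  then have Q_order: "search_order Q V E s \<sigma> \<and> \<sigma> \<noteq> [] \<and> hd \<sigma> = s \<longleftrightarrow> comp_order_from P V E s \<sigma>" for \<sigma>
    using assms(2) by (auto simp: search_order_iff comp_order_from_def)
  have P_order: "search_order P V E s \<sigma> \<and> \<sigma> \<noteq> [] \<and> hd \<sigma> = s \<longleftrightarrow>
      comp_order_from P V E s \<sigma> \<and> (\<forall>k<length \<sigma>. lex_max_step P V E s \<sigma> k)" for \<sigma>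
    using assms(1)
    by (auto simp: search_order_iff comp_order_from_def intro: lex_max_step_imp_comp_lex_max_step)
  show ?thesis
  proof
    assume "is_L_tree P V E s T"
    then obtain \<sigma> where "search_order P V E s \<sigma> \<and> \<sigma> \<noteq> [] \<and> hd \<sigma> = s" "L_tree_edges E \<sigma> = T"
      unfolding is_L_tree_def by blast
    then show "is_L_tree Q V E s T"
      unfolding is_L_tree_def P_order Q_order[symmetric] by blast
  next
    assume "is_L_tree Q V E s T"
    then obtain \<sigma> where "search_order Q V E s \<sigma> \<and> \<sigma> \<noteq> [] \<and> hd \<sigma> = s" "L_tree_edges E \<sigma> = T"
      unfolding is_L_tree_def by blast
    then have \<sigma>: "comp_order_from P V E s \<sigma>" "L_tree_edges E \<sigma> = T"
      unfolding Q_order by simp_all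
    then obtain \<tau> where \<tau>: "comp_order_from P V E s \<tau>"
        "\<forall>k<length \<sigma>. lex_max_step P V E s \<tau> k" "L_tree_edges E \<tau> = L_tree_edges E \<sigma>"
      using comp_order_from_lex_max_prefix[OF \<sigma>(1) order_refl] by blast
    moreover have "length \<tau> = length \<sigma>"
      using \<sigma>(1) \<tau>(1) by (simp add: length_comp_order_from)
    ultimately have "search_order P V E s \<tau> \<and> \<tau> \<noteq> [] \<and> hd \<tau> = s"
      unfolding P_order by simp
    then show "is_L_tree P V E s T"
      unfolding is_L_tree_def using \<sigma>(2) \<tau>(3) by blast
  qed
qed

theorem lemma14:
  fixes V :: "'a set" and E T :: "'a set set" and s :: 'a
  assumes "simple_graph V E" and "graph_connected V E"
    and "spanning_tree V E T" and "s \<in> V"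
  shows "(is_L_tree LexDFS V E s T \<longleftrightarrow> is_L_tree CompLexDFS V E s T) \<and>
         (is_L_tree LexBFS V E s T \<longleftrightarrow> is_L_tree CompLexBFS V E s T)"
proof
  show "is_L_tree LexDFS V E s T \<longleftrightarrow> is_L_tree CompLexDFS V E s T"
    by (rule is_L_tree_comp_search_iff) (simp_all add: is_comp_search_def search_label_def fun_eq_iff)
  show "is_L_tree LexBFS V E s T \<longleftrightarrow> is_L_tree CompLexBFS V E s T"
    by (rule is_L_tree_comp_search_iff) (simp_all add: is_comp_search_def search_label_def fun_eq_iff)
qed

end
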